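(* Let $P,Q$ be posets with least elements and $\langle f,g\rangle:P\times Q\to P\times Q$ a monotone map (with $f:P\times Q\to P$, $g:P\times Q\to Q$, product ordered coordinatewise). Let $m,n\ge0$ be such that for every $x\in P$ the map $g_x=g(x,-)$ satisfies $\mu_y.g(x,y)=g_x^m(\bot)$, and such that the map $h(x)=f(x,\mu_y.g(x,y))$ satisfies $\mu.h=h^n(\bot)$. Then $\langle f,g\rangle$ has a least fixed point and $\mu.\langle f,g\rangle=\langle f,g\rangle^{(n+1)(m+1)-1}(\bot,\bot)$.
   Context: $\mu.k$ denotes the least fixed point of a monotone map $k$; $k^n$ the $n$-fold composite. *)

theory Defs
  imports Main "HOL-Library.Product_Order"
begin

definition is_lfp :: "('a::order \<Rightarrow> 'a) \<Rightarrow> 'a \<Rightarrow> bool" where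
  "is_lfp k x \<longleftrightarrow> k x = x \<and> (\<forall>y. k y = y \<longrightarrow> x \<le> y)"

text \<open>The least fixed point mu.k (meaningful when it exists).\<close>
definition mu :: "('a::order \<Rightarrow> 'a) \<Rightarrow> 'a" where
  "mu k = (THE x. is_lfp k x)"

end

theory Submission
  imports Defs
begin

text \<open>
  Write \<open>F = \<langle>f, g\<rangle>\<close>, \<open>h x = f (x, g\<^sub>x\<^sup>m \<bottom>)\<close>, \<open>a = h\<^sup>n \<bottom>\<close> and \<open>b = g\<^sub>a\<^sup>m \<bottom>\<close>.
  Then \<open>(a, b)\<close> is a fixed point of \<open>F\<close>, so every Kleene iterate of \<open>F\<close> lies below it.
  Conversely, the Kleene iteration of \<open>F\<close> simulates the nested iteration: once the first
  coordinate has reached some \<open>x\<close>, the next \<open>m\<close> steps of \<open>F\<close> dominate \<open>g\<^sub>x\<^sup>m \<bottom>\<close> in the second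
  coordinate, and one further step dominates \<open>h x\<close> in the first. Hence after \<open>n (m + 1) + m\<close>
  steps the iteration reaches \<open>(a, b)\<close>, which is therefore a fixed point reached from \<open>\<bottom>\<close>,
  hence the least one.
\<close>

lemma is_lfp_mu: "is_lfp k (x::'a::order) \<Longrightarrow> mu k = x"
  unfolding mu_def
  by (rule the_equality) (auto simp: is_lfp_def intro: order.antisym)

lemma funpow_bot_le_fixpoint:
  fixes k :: "'a::order_bot \<Rightarrow> 'a"
  assumes "mono k" and "k y = y"
  shows "(k ^^ i) bot \<le> y"
proof (induction i)
  case (Suc i)
  then have "k ((k ^^ i) bot) \<le> k y" by (rule monoD[OF \<open>mono k\<close>])
  with \<open>k y = y\<close> show ?case by simp
qed simp

lemma is_lfp_funpow_bot:
  fixes k :: "'a::order_bot \<Rightarrow> 'a"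
  assumes "mono k" and "k ((k ^^ N) bot) = (k ^^ N) bot"
  shows "is_lfp k ((k ^^ N) bot)"
  using assms funpow_bot_le_fixpoint unfolding is_lfp_def by blast

context
  fixes f :: "'p::order_bot \<times> 'q::order_bot \<Rightarrow> 'p"
    and g :: "'p \<times> 'q \<Rightarrow> 'q"
  assumes mono_fg: "mono (\<lambda>z. (f z, g z))"
begin

lemma inner_iteration_below_kleene:
  assumes "x \<le> fst (((\<lambda>z. (f z, g z)) ^^ t) (bot, bot))"
  shows "(x, ((\<lambda>y. g (x, y)) ^^ i) bot) \<le> ((\<lambda>z. (f z, g z)) ^^ (t + i)) (bot, bot)"
proof (induction i)
  case 0
  with assms show ?case by (simp add: less_eq_prod_def)
next
  case (Suc i)
  let ?F = "\<lambda>z. (f z, g z)"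
  have step: "?F (x, ((\<lambda>y. g (x, y)) ^^ i) bot) \<le> (?F ^^ (t + Suc i)) (bot, bot)"
    using monoD[OF mono_fg Suc.IH] by simp
  have "(?F ^^ (t + i)) (bot, bot) \<le> (?F ^^ (t + Suc i)) (bot, bot)"
    using funpow_decreasing[OF _ mono_fg, of "t + i" "t + Suc i"] by (simp add: bot_prod_def)
  with Suc.IH have "x \<le> fst ((?F ^^ (t + Suc i)) (bot, bot))"
    by (auto simp: less_eq_prod_def)
  with step show ?case by (simp add: less_eq_prod_def)
qed

lemma outer_iteration_below_kleene:
  "((\<lambda>x. f (x, ((\<lambda>y. g (x, y)) ^^ m) bot)) ^^ j) bot
     \<le> fst (((\<lambda>z. (f z, g z)) ^^ (j * (m + 1))) (bot, bot))"
proof (induction j)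
  case (Suc j)
  let ?F = "\<lambda>z. (f z, g z)" and ?x = "((\<lambda>x. f (x, ((\<lambda>y. g (x, y)) ^^ m) bot)) ^^ j) bot"
  have "?F (?x, ((\<lambda>y. g (?x, y)) ^^ m) bot) \<le> ?F ((?F ^^ (j * (m + 1) + m)) (bot, bot))"
    using monoD[OF mono_fg inner_iteration_below_kleene[OF Suc.IH]] .
  moreover have "Suc j * (m + 1) = Suc (j * (m + 1) + m)" by simp
  ultimately show ?case by (simp only: funpow.simps comp_apply) (simp add: less_eq_prod_def)
qed simp

end

theorem mainTheorem14:
  fixes f :: "'p::order_bot \<times> 'q::order_bot \<Rightarrow> 'p"
    and g :: "'p \<times> 'q \<Rightarrow> 'q"
    and m n :: nat
  assumes mono_fg: "mono (\<lambda>z. (f z, g z))"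
    and hg: "\<forall>x. is_lfp (\<lambda>y. g (x, y)) (((\<lambda>y. g (x, y)) ^^ m) bot)"
    and hh: "is_lfp (\<lambda>x. f (x, mu (\<lambda>y. g (x, y))))
               (((\<lambda>x. f (x, mu (\<lambda>y. g (x, y)))) ^^ n) bot)"
  shows "is_lfp (\<lambda>z. (f z, g z))
           (((\<lambda>z. (f z, g z)) ^^ ((n + 1) * (m + 1) - 1)) (bot, bot))"
proof -
  let ?F = "\<lambda>z. (f z, g z)" and ?h = "\<lambda>x. f (x, ((\<lambda>y. g (x, y)) ^^ m) bot)"
  define a where "a = (?h ^^ n) bot"
  define b where "b = ((\<lambda>y. g (a, y)) ^^ m) bot"
  have "(\<lambda>x. f (x, mu (\<lambda>y. g (x, y)))) = ?h"
    using hg is_lfp_mu by metis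
  with hh have "?h a = a" by (simp add: is_lfp_def a_def)
  moreover have "g (a, b) = b" using hg by (simp add: is_lfp_def b_def)
  ultimately have fix_ab: "?F (a, b) = (a, b)" by (simp add: b_def)
  have N: "(n + 1) * (m + 1) - 1 = n * (m + 1) + m" by simp
  have "(a, b) \<le> (?F ^^ (n * (m + 1) + m)) (bot, bot)"
    unfolding a_def b_def
    by (rule inner_iteration_below_kleene[OF mono_fg outer_iteration_below_kleene[OF mono_fg]])
  with funpow_bot_le_fixpoint[OF mono_fg fix_ab, unfolded bot_prod_def]
  have reached: "(?F ^^ ((n + 1) * (m + 1) - 1)) (bot, bot) = (a, b)"
    unfolding N by (blast intro: order.antisym)
  show ?thesis
    using is_lfp_funpow_bot[OF mono_fg, of "(n + 1) * (m + 1) - 1", unfolded bot_prod_def reached]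
      fix_ab
    unfolding reached by blast
qed

end
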